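(* Let $\varphi:\Lambda\to\Gamma$ be a regular covering map of degree $n$ of finite simplicial graphs without isolated vertices, with $|V\Gamma|=m$. Order $V\Lambda$ so that each fiber forms a consecutive block, the blocks being $V_1,\dots,V_m$, and order $V\Gamma$ as $\varphi(V_1),\dots,\varphi(V_m)$. Let $F\in\mathrm{Aut}(A_\Lambda)$ be a lift of $f\in\mathrm{Aut}(A_\Gamma)$. Then the $nm\times nm$ matrix $\tilde M$ of the action of $F$ on $H_1(A_\Lambda)$ is a blow up of the $m\times m$ matrix $M$ of the action of $f$ on $H_1(A_\Gamma)$.
   Context: $A_\Gamma$ is the right-angled Artin group with generators $V\Gamma$ and relations $[a,b]=1$ for edges; $H_1(A_\Gamma)\cong\mathbb Z^{V\Gamma}$ with basis the vertices, and the matrix of an automorphism has as the column of a vertex $v$ the coordinates of the image of $v$. A covering map $\varphi:\Lambda\to\Gamma$ is a surjective simplicial map mapping the neighbours of each vertex $u$ bijectively onto the neighbours of $\varphi(u)$; regular means the group of graph automorphisms $\mu$ of $\Lambda$ with $\varphi\mu=\varphi$ acts transitively on each fiber; the degree is the common fiber size. $\phi:A_\Lambda\to A_\Gamma$ is induced by $\varphi$, and $F$ is a lift of $f$ if $f\circ\phi=\phi\circ F$. An $nm\times nm$ matrix $\tilde M$ with $n\times n$ blocks is a blow up of an $m\times m$ matrix $M$ if, for all $i,j$, every column of the $(i,j)$ block of $\tilde M$ has all entries $0$ except one entry equal to $M(i,j)$. *)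

theory Defs
  imports "HOL-Algebra.Group"
begin

definition simple_graph :: "'v set \<Rightarrow> ('v \<Rightarrow> 'v \<Rightarrow> bool) \<Rightarrow> bool" where
  "simple_graph V E \<longleftrightarrow> finite V \<and> (\<forall>u w. E u w \<longrightarrow> u \<in> V \<and> w \<in> V)
     \<and> (\<forall>u w. E u w \<longrightarrow> E w u) \<and> (\<forall>u. \<not> E u u)"

definition no_isolated :: "'v set \<Rightarrow> ('v \<Rightarrow> 'v \<Rightarrow> bool) \<Rightarrow> bool" where
  "no_isolated V E \<longleftrightarrow> (\<forall>v\<in>V. \<exists>w. E v w)"

definition covering_map ::
  "'a set \<Rightarrow> ('a \<Rightarrow> 'a \<Rightarrow> bool) \<Rightarrow> 'b set \<Rightarrow> ('b \<Rightarrow> 'b \<Rightarrow> bool) \<Rightarrow> ('a \<Rightarrow> 'b) \<Rightarrow> bool" where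
  "covering_map VL EL VG EG p \<longleftrightarrow> p ` VL = VG
     \<and> (\<forall>u w. EL u w \<longrightarrow> EG (p u) (p w))
     \<and> (\<forall>u\<in>VL. bij_betw p {w. EL u w} {y. EG (p u) y})"

definition graph_aut :: "'a set \<Rightarrow> ('a \<Rightarrow> 'a \<Rightarrow> bool) \<Rightarrow> ('a \<Rightarrow> 'a) \<Rightarrow> bool" where
  "graph_aut V E \<mu> \<longleftrightarrow> bij_betw \<mu> V V \<and> (\<forall>u\<in>V. \<forall>w\<in>V. E (\<mu> u) (\<mu> w) \<longleftrightarrow> E u w)"

definition deck_group ::
  "'a set \<Rightarrow> ('a \<Rightarrow> 'a \<Rightarrow> bool) \<Rightarrow> ('a \<Rightarrow> 'b) \<Rightarrow> ('a \<Rightarrow> 'a) set" where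
  "deck_group VL EL p = {\<mu>. graph_aut VL EL \<mu> \<and> (\<forall>u\<in>VL. p (\<mu> u) = p u)}"

definition regular_covering ::
  "'a set \<Rightarrow> ('a \<Rightarrow> 'a \<Rightarrow> bool) \<Rightarrow> 'b set \<Rightarrow> ('b \<Rightarrow> 'b \<Rightarrow> bool) \<Rightarrow> ('a \<Rightarrow> 'b) \<Rightarrow> bool" where
  "regular_covering VL EL VG EG p \<longleftrightarrow> covering_map VL EL VG EG p
     \<and> (\<forall>u\<in>VL. \<forall>u'\<in>VL. p u = p u' \<longrightarrow> (\<exists>\<mu>\<in>deck_group VL EL p. \<mu> u = u'))"

definition fiber :: "'a set \<Rightarrow> ('a \<Rightarrow> 'b) \<Rightarrow> 'b \<Rightarrow> 'a set" where
  "fiber VL p x = {u \<in> VL. p u = x}"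

text \<open>Words in the generators and their inverses: a letter (v, True) is v, (v, False) is v^-1.\<close>

definition words :: "'v set \<Rightarrow> ('v \<times> bool) list set" where
  "words V = {w. \<forall>l \<in> set w. fst l \<in> V}"

inductive_set raag_step :: "'v set \<Rightarrow> ('v \<Rightarrow> 'v \<Rightarrow> bool) \<Rightarrow> (('v \<times> bool) list \<times> ('v \<times> bool) list) set"
  for V E where
  cancel: "\<lbrakk>xs \<in> words V; ys \<in> words V; a \<in> V\<rbrakk> \<Longrightarrow>
     (xs @ [(a, b), (a, \<not> b)] @ ys, xs @ ys) \<in> raag_step V E"
| comm: "\<lbrakk>xs \<in> words V; ys \<in> words V; a \<in> V; c \<in> V; E a c\<rbrakk> \<Longrightarrow>
     (xs @ [(a, b), (c, d)] @ ys, xs @ [(c, d), (a, b)] @ ys) \<in> raag_step V E"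

definition raag_eq :: "'v set \<Rightarrow> ('v \<Rightarrow> 'v \<Rightarrow> bool) \<Rightarrow> (('v \<times> bool) list \<times> ('v \<times> bool) list) set" where
  "raag_eq V E = (raag_step V E \<union> (raag_step V E)\<inverse>)\<^sup>*"

definition rep :: "'x set \<Rightarrow> 'x" where
  "rep X = (SOME x. x \<in> X)"

definition RAAG :: "'v set \<Rightarrow> ('v \<Rightarrow> 'v \<Rightarrow> bool) \<Rightarrow> ('v \<times> bool) list set monoid" where
  "RAAG V E = \<lparr> carrier = words V // raag_eq V E,
                mult = (\<lambda>X Y. raag_eq V E `` {rep X @ rep Y}),
                one = raag_eq V E `` {[]} \<rparr>"

definition raag_gen :: "'v set \<Rightarrow> ('v \<Rightarrow> 'v \<Rightarrow> bool) \<Rightarrow> 'v \<Rightarrow> ('v \<times> bool) list set" where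
  "raag_gen V E v = raag_eq V E `` {[(v, True)]}"

definition induced_hom ::
  "'b set \<Rightarrow> ('b \<Rightarrow> 'b \<Rightarrow> bool) \<Rightarrow> ('a \<Rightarrow> 'b) \<Rightarrow> ('a \<times> bool) list set \<Rightarrow> ('b \<times> bool) list set" where
  "induced_hom VG EG p X = raag_eq VG EG `` {map (\<lambda>(a, s). (p a, s)) (rep X)}"

text \<open>Coordinate of vertex v of the image in H_1(A_Gamma) = Z^V of a group element (exponent sum).\<close>
definition exp_sum :: "('v \<times> bool) list set \<Rightarrow> 'v \<Rightarrow> int" where
  "exp_sum X v = int (length (filter (\<lambda>l. l = (v, True)) (rep X)))
                - int (length (filter (\<lambda>l. l = (v, False)) (rep X)))"

text \<open>Matrix of an automorphism f on H_1, indexed by vertices: entry (w, v) is the w-coordinate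
  of the image of v (column of v = coordinates of f(v)).\<close>
definition H1_matrix :: "'v set \<Rightarrow> ('v \<Rightarrow> 'v \<Rightarrow> bool) \<Rightarrow> (('v \<times> bool) list set \<Rightarrow> ('v \<times> bool) list set)
    \<Rightarrow> 'v \<Rightarrow> 'v \<Rightarrow> int" where
  "H1_matrix V E f w v = exp_sum (f (raag_gen V E v)) w"

text \<open>Blow up, with rows/columns of the big matrix grouped into fibers: the (x,y) block consists of
  rows in the fiber over x and columns in the fiber over y.\<close>
definition blow_up :: "'a set \<Rightarrow> 'b set \<Rightarrow> ('a \<Rightarrow> 'b) \<Rightarrow> ('a \<Rightarrow> 'a \<Rightarrow> int) \<Rightarrow> ('b \<Rightarrow> 'b \<Rightarrow> int) \<Rightarrow> bool" where
  "blow_up VL VG p Mt M \<longleftrightarrow>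
     (\<forall>x\<in>VG. \<forall>y\<in>VG. \<forall>u\<in>fiber VL p y. \<exists>w\<in>fiber VL p x.
        Mt w u = M x y \<and> (\<forall>w'\<in>fiber VL p x. w' \<noteq> w \<longrightarrow> Mt w' u = 0))"

end

theory Submission
  imports Defs
begin

(* Exponent sums are invariant under the defining relations, so the action on H_1 is well defined
   and linear, and the matrix of an automorphism has a left inverse. For distinct non-adjacent
   vertices s, t the signed number of occurrences of s before t is invariant as well; comparing it
   on xy and yx shows that commuting elements x, y satisfy e_s(x) e_t(y) = e_s(y) e_t(x).
   Apply this to the images of two adjacent generators u, a of A_Lambda. Two distinct vertices of
   one fiber are non-adjacent and have no common neighbour, so if both had a nonzero entry in the
   column of u, the column of a would be a multiple of the column of u, contradicting
   invertibility. On the other hand, since F lifts f and the covering maps generators to generators,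
   the entry of M at (x, phi(u)) is the sum of the column of u over the fiber over x. Hence every
   column of a block has at most one nonzero entry, and its sum is the corresponding entry of M. *)

section \<open>Exponent sums and linking numbers of words\<close>

definition letter_sign :: "bool \<Rightarrow> int" where
  "letter_sign b = (if b then 1 else -1)"

fun word_exp_sum :: "('v \<times> bool) list \<Rightarrow> 'v \<Rightarrow> int" where
  "word_exp_sum [] v = 0"
| "word_exp_sum (l # xs) v = (if fst l = v then letter_sign (snd l) else 0) + word_exp_sum xs v"

fun word_linking :: "'v \<Rightarrow> 'v \<Rightarrow> ('v \<times> bool) list \<Rightarrow> int" where
  "word_linking s t [] = 0"
| "word_linking s t (l # xs) =
     (if fst l = s then letter_sign (snd l) * word_exp_sum xs t else 0) + word_linking s t xs"

lemma word_exp_sum_append [simp]: "word_exp_sum (xs @ ys) v = word_exp_sum xs v + word_exp_sum ys v"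
  by (induction xs) auto

lemma word_linking_append:
  "word_linking s t (xs @ ys) = word_linking s t xs + word_linking s t ys + word_exp_sum xs s * word_exp_sum ys t"
  by (induction xs) (auto simp: algebra_simps)

lemma exp_sum_eq_word_exp_sum: "exp_sum X v = word_exp_sum (rep X) v"
proof -
  have "int (length (filter (\<lambda>l. l = (v, True)) xs)) - int (length (filter (\<lambda>l. l = (v, False)) xs))
      = word_exp_sum xs v" for xs
    by (induction xs) (auto simp: letter_sign_def)
  then show ?thesis unfolding exp_sum_def .
qed

lemma raag_step_word_exp_sum: "(xs, ys) \<in> raag_step V E \<Longrightarrow> word_exp_sum xs v = word_exp_sum ys v"
  by (induction rule: raag_step.induct) (auto simp: letter_sign_def)

lemma raag_step_word_linking:
  assumes "(xs, ys) \<in> raag_step V E" "s \<noteq> t" "\<not> E s t" "\<And>a c. E a c \<Longrightarrow> E c a"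
  shows "word_linking s t xs = word_linking s t ys"
  using assms by (induction rule: raag_step.induct) (auto simp: word_linking_append letter_sign_def)

section \<open>The group A_Gamma\<close>

lemma raag_eq_invariant:
  assumes "(xs, ys) \<in> raag_eq V E" "\<And>xs ys. (xs, ys) \<in> raag_step V E \<Longrightarrow> g xs = g ys"
  shows "g xs = g ys"
  using assms(1) unfolding raag_eq_def by (induction rule: rtrancl_induct) (auto dest: assms(2))

lemma equiv_raag_eq: "equiv UNIV (raag_eq V E)"
  unfolding raag_eq_def
  by (simp add: equivI refl_rtrancl sym_rtrancl sym_Un_converse trans_rtrancl)

lemma raag_eq_class_eq_iff: "raag_eq V E `` {xs} = raag_eq V E `` {ys} \<longleftrightarrow> (xs, ys) \<in> raag_eq V E"
  using eq_equiv_class_iff[OF equiv_raag_eq] by blast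

lemma words_append [simp]: "xs @ ys \<in> words V \<longleftrightarrow> xs \<in> words V \<and> ys \<in> words V"
  by (auto simp: words_def)

lemma raag_eq_words:
  assumes "(xs, ys) \<in> raag_eq V E" "xs \<in> words V"
  shows "ys \<in> words V"
proof -
  have step_words: "xs \<in> words V \<and> ys \<in> words V" if "(xs, ys) \<in> raag_step V E" for xs ys
    using that by (induction rule: raag_step.induct) (auto simp: words_def)
  from assms show ?thesis
    unfolding raag_eq_def by (induction rule: rtrancl_induct) (auto dest: step_words)
qed

lemma raag_step_append_context:
  "(xs, ys) \<in> raag_step V E \<Longrightarrow> zs \<in> words V \<Longrightarrow> ws \<in> words V
   \<Longrightarrow> (zs @ xs @ ws, zs @ ys @ ws) \<in> raag_step V E"
proof (induction rule: raag_step.induct)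
  case (cancel xs ys a b)
  then have "((zs @ xs) @ [(a, b), (a, \<not> b)] @ (ys @ ws), (zs @ xs) @ (ys @ ws)) \<in> raag_step V E"
    by (intro raag_step.cancel) (auto simp: words_def)
  then show ?case by simp
next
  case (comm xs ys a c b d)
  then have "((zs @ xs) @ [(a, b), (c, d)] @ (ys @ ws), (zs @ xs) @ [(c, d), (a, b)] @ (ys @ ws))
      \<in> raag_step V E"
    by (intro raag_step.comm) (auto simp: words_def)
  then show ?case by simp
qed

lemma raag_eq_append_context:
  "(xs, ys) \<in> raag_eq V E \<Longrightarrow> zs \<in> words V \<Longrightarrow> ws \<in> words V
   \<Longrightarrow> (zs @ xs @ ws, zs @ ys @ ws) \<in> raag_eq V E"
  unfolding raag_eq_def
proof (induction rule: rtrancl_induct)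
  case (step ys us)
  then have "(zs @ ys @ ws, zs @ us @ ws) \<in> raag_step V E \<union> (raag_step V E)\<inverse>"
    using raag_step_append_context by blast
  with step show ?case by (meson rtrancl.rtrancl_into_rtrancl)
qed simp

lemma raag_eq_rep_class: "(xs, rep (raag_eq V E `` {xs})) \<in> raag_eq V E"
proof -
  have "rep (raag_eq V E `` {xs}) \<in> raag_eq V E `` {xs}"
    unfolding rep_def by (rule someI[of _ xs]) (simp add: raag_eq_def)
  then show ?thesis by simp
qed

lemma class_in_carrier_RAAG: "xs \<in> words V \<Longrightarrow> raag_eq V E `` {xs} \<in> carrier (RAAG V E)"
  unfolding RAAG_def by (auto intro: quotientI)

lemma carrier_RAAG_rep:
  assumes "X \<in> carrier (RAAG V E)"
  shows "rep X \<in> words V" and "raag_eq V E `` {rep X} = X"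
proof -
  from assms obtain xs where xs: "xs \<in> words V" "X = raag_eq V E `` {xs}"
    unfolding RAAG_def by (auto elim: quotientE)
  moreover have "(xs, rep X) \<in> raag_eq V E"
    using raag_eq_rep_class xs(2) by blast
  ultimately show "rep X \<in> words V" "raag_eq V E `` {rep X} = X"
    by (simp_all add: raag_eq_words flip: raag_eq_class_eq_iff)
qed

lemma raag_gen_in_carrier: "v \<in> V \<Longrightarrow> raag_gen V E v \<in> carrier (RAAG V E)"
  by (simp add: raag_gen_def class_in_carrier_RAAG words_def)

lemma RAAG_mult: "X \<otimes>\<^bsub>RAAG V E\<^esub> Y = raag_eq V E `` {rep X @ rep Y}"
  by (simp add: RAAG_def)

lemma RAAG_one: "\<one>\<^bsub>RAAG V E\<^esub> = raag_eq V E `` {[]}"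
  by (simp add: RAAG_def)

lemma RAAG_mult_class:
  assumes "xs \<in> words V" "ys \<in> words V"
  shows "raag_eq V E `` {xs} \<otimes>\<^bsub>RAAG V E\<^esub> raag_eq V E `` {ys} = raag_eq V E `` {xs @ ys}"
proof -
  let ?xs' = "rep (raag_eq V E `` {xs})" and ?ys' = "rep (raag_eq V E `` {ys})"
  have "[] \<in> words V" "?xs' \<in> words V"
    using raag_eq_words[OF raag_eq_rep_class assms(1)] by (auto simp: words_def)
  then have "raag_eq V E `` {[] @ xs @ ys} = raag_eq V E `` {[] @ ?xs' @ ys}"
    and "raag_eq V E `` {?xs' @ ys @ []} = raag_eq V E `` {?xs' @ ?ys' @ []}"
    using assms raag_eq_class_eq_iff
    by (metis raag_eq_append_context raag_eq_rep_class)+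
  then show ?thesis by (simp add: RAAG_mult)
qed

definition word_inverse :: "('v \<times> bool) list \<Rightarrow> ('v \<times> bool) list" where
  "word_inverse xs = rev (map (\<lambda>(a, b). (a, \<not> b)) xs)"

lemma word_inverse_words: "xs \<in> words V \<Longrightarrow> word_inverse xs \<in> words V"
  by (auto simp: words_def word_inverse_def)

lemma word_inverse_cancel: "xs \<in> words V \<Longrightarrow> (word_inverse xs @ xs, []) \<in> raag_eq V E"
proof (induction xs)
  case (Cons l xs)
  obtain a b where l: "l = (a, b)" by fastforce
  with Cons.prems have "a \<in> V" "xs \<in> words V" by (auto simp: words_def)
  then have "(word_inverse xs @ [(a, \<not> b), (a, \<not> \<not> b)] @ xs, word_inverse xs @ xs) \<in> raag_step V E"
    by (intro raag_step.cancel word_inverse_words)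
  then have "(word_inverse (l # xs) @ l # xs, word_inverse xs @ xs) \<in> raag_eq V E"
    by (simp add: l word_inverse_def raag_eq_def r_into_rtrancl)
  with Cons.IH \<open>xs \<in> words V\<close> show ?case
    unfolding raag_eq_def by (meson rtrancl_trans)
qed (simp add: word_inverse_def raag_eq_def)

lemma group_RAAG: "group (RAAG V E)"
proof (rule groupI)
  fix X Y Z
  assume X: "X \<in> carrier (RAAG V E)" and Y: "Y \<in> carrier (RAAG V E)" and Z: "Z \<in> carrier (RAAG V E)"
  have words: "rep X \<in> words V" "rep Y \<in> words V" "rep Z \<in> words V"
    using X Y Z by (simp_all add: carrier_RAAG_rep)
  have classes: "X = raag_eq V E `` {rep X}" "Y = raag_eq V E `` {rep Y}" "Z = raag_eq V E `` {rep Z}"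
    using X Y Z by (simp_all add: carrier_RAAG_rep)
  show "X \<otimes>\<^bsub>RAAG V E\<^esub> Y \<in> carrier (RAAG V E)"
    using words by (simp add: RAAG_mult class_in_carrier_RAAG)
  show "(X \<otimes>\<^bsub>RAAG V E\<^esub> Y) \<otimes>\<^bsub>RAAG V E\<^esub> Z = X \<otimes>\<^bsub>RAAG V E\<^esub> (Y \<otimes>\<^bsub>RAAG V E\<^esub> Z)"
  proof -
    have "(raag_eq V E `` {xs} \<otimes>\<^bsub>RAAG V E\<^esub> raag_eq V E `` {ys}) \<otimes>\<^bsub>RAAG V E\<^esub> raag_eq V E `` {zs}
        = raag_eq V E `` {xs} \<otimes>\<^bsub>RAAG V E\<^esub> (raag_eq V E `` {ys} \<otimes>\<^bsub>RAAG V E\<^esub> raag_eq V E `` {zs})"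
      if "xs \<in> words V" "ys \<in> words V" "zs \<in> words V" for xs ys zs
      by (simp add: RAAG_mult_class that)
    then show ?thesis using classes words by metis
  qed
  have "[] \<in> words V" by (simp add: words_def)
  then show "\<one>\<^bsub>RAAG V E\<^esub> \<otimes>\<^bsub>RAAG V E\<^esub> X = X"
    unfolding RAAG_one using RAAG_mult_class[OF _ words(1)] classes(1) by (metis append.simps(1))
  show "\<exists>X'\<in>carrier (RAAG V E). X' \<otimes>\<^bsub>RAAG V E\<^esub> X = \<one>\<^bsub>RAAG V E\<^esub>"
  proof
    show "raag_eq V E `` {word_inverse (rep X)} \<in> carrier (RAAG V E)"
      by (simp add: class_in_carrier_RAAG word_inverse_words words)
    show "raag_eq V E `` {word_inverse (rep X)} \<otimes>\<^bsub>RAAG V E\<^esub> X = \<one>\<^bsub>RAAG V E\<^esub>"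
      using word_inverse_cancel[OF words(1)] classes(1) words(1)
      by (metis RAAG_mult_class RAAG_one word_inverse_words raag_eq_class_eq_iff)
  qed
qed (simp add: RAAG_one words_def class_in_carrier_RAAG)

section \<open>The action on H_1\<close>

lemma exp_sum_class: "exp_sum (raag_eq V E `` {xs}) v = word_exp_sum xs v"
  using raag_eq_invariant[OF raag_eq_rep_class, where g="\<lambda>xs. word_exp_sum xs v"]
  by (simp add: exp_sum_eq_word_exp_sum raag_step_word_exp_sum)

lemma exp_sum_raag_gen: "exp_sum (raag_gen V E v) w = (if v = w then 1 else 0)"
  by (simp add: raag_gen_def exp_sum_class letter_sign_def)

lemma exp_sum_mult: "exp_sum (X \<otimes>\<^bsub>RAAG V E\<^esub> Y) v = exp_sum X v + exp_sum Y v"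
  unfolding RAAG_mult exp_sum_class by (simp add: exp_sum_eq_word_exp_sum)

lemma exp_sum_commuting_minor:
  assumes "X \<otimes>\<^bsub>RAAG V E\<^esub> Y = Y \<otimes>\<^bsub>RAAG V E\<^esub> X"
    and "s \<noteq> t" "\<not> E s t" "\<And>a c. E a c \<Longrightarrow> E c a"
  shows "exp_sum X s * exp_sum Y t = exp_sum Y s * exp_sum X t"
proof -
  have "(rep X @ rep Y, rep Y @ rep X) \<in> raag_eq V E"
    using assms(1) by (simp add: RAAG_mult raag_eq_class_eq_iff)
  then have "word_linking s t (rep X @ rep Y) = word_linking s t (rep Y @ rep X)"
    by (rule raag_eq_invariant) (rule raag_step_word_linking[where E = E, OF _ assms(2-4)])
  then show ?thesis
    unfolding word_linking_append exp_sum_eq_word_exp_sum by linarith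
qed

lemma exp_sum_hom_letter:
  assumes "\<Phi> \<in> hom (RAAG V E) (RAAG W D)" "v \<in> V"
  shows "exp_sum (\<Phi> (raag_eq V E `` {[(v, b)]})) t = letter_sign b * H1_matrix V E \<Phi> t v"
proof (cases b)
  case False
  have words: "[(v, False)] \<in> words V" "[(v, True)] \<in> words V"
    using assms(2) by (simp_all add: words_def)
  have "raag_eq V E `` {[(v, False)]} \<otimes>\<^bsub>RAAG V E\<^esub> raag_gen V E v = \<one>\<^bsub>RAAG V E\<^esub>"
    using word_inverse_cancel[OF words(2)]
    by (simp add: raag_gen_def RAAG_mult_class words RAAG_one word_inverse_def raag_eq_class_eq_iff)
  then have "\<Phi> (raag_eq V E `` {[(v, False)]}) \<otimes>\<^bsub>RAAG W D\<^esub> \<Phi> (raag_gen V E v) = \<one>\<^bsub>RAAG W D\<^esub>"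
    using hom_mult[OF assms(1) class_in_carrier_RAAG[OF words(1)] raag_gen_in_carrier[OF assms(2)]]
      hom_one[OF assms(1) group_RAAG group_RAAG] by simp
  then have "exp_sum (\<Phi> (raag_eq V E `` {[(v, False)]})) t + exp_sum (\<Phi> (raag_gen V E v)) t = 0"
    by (metis exp_sum_mult RAAG_one exp_sum_class word_exp_sum.simps(1))
  with False show ?thesis by (simp add: H1_matrix_def letter_sign_def)
next
  case True
  then show ?thesis by (simp add: H1_matrix_def letter_sign_def raag_gen_def)
qed

lemma exp_sum_hom_class:
  assumes "finite V" "\<Phi> \<in> hom (RAAG V E) (RAAG W D)" "xs \<in> words V"
  shows "exp_sum (\<Phi> (raag_eq V E `` {xs})) t = (\<Sum>v\<in>V. word_exp_sum xs v * H1_matrix V E \<Phi> t v)"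
  using assms(3)
proof (induction xs)
  case Nil
  have "\<Phi> (raag_eq V E `` {[]}) = \<one>\<^bsub>RAAG W D\<^esub>"
    using hom_one[OF assms(2) group_RAAG group_RAAG] by (simp add: RAAG_one)
  then show ?case by (simp add: RAAG_one exp_sum_class)
next
  case (Cons l xs)
  obtain v b where l: "l = (v, b)" by fastforce
  with Cons.prems have words: "[(v, b)] \<in> words V" "xs \<in> words V" and v: "v \<in> V"
    by (simp_all add: words_def)
  have "\<Phi> (raag_eq V E `` {l # xs})
      = \<Phi> (raag_eq V E `` {[(v, b)]}) \<otimes>\<^bsub>RAAG W D\<^esub> \<Phi> (raag_eq V E `` {xs})"
    using RAAG_mult_class[OF words] hom_mult[OF assms(2)] class_in_carrier_RAAG words l
    by (metis append_Cons append_Nil)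
  then have "exp_sum (\<Phi> (raag_eq V E `` {l # xs})) t
      = exp_sum (\<Phi> (raag_eq V E `` {[(v, b)]})) t + exp_sum (\<Phi> (raag_eq V E `` {xs})) t"
    by (simp add: exp_sum_mult)
  also have "\<dots> = letter_sign b * H1_matrix V E \<Phi> t v
      + (\<Sum>w\<in>V. word_exp_sum xs w * H1_matrix V E \<Phi> t w)"
    using exp_sum_hom_letter[OF assms(2) v] Cons.IH words(2) by simp
  also have "\<dots> = (\<Sum>w\<in>V. word_exp_sum (l # xs) w * H1_matrix V E \<Phi> t w)"
  proof -
    have "(\<Sum>w\<in>V. word_exp_sum (l # xs) w * H1_matrix V E \<Phi> t w)
        = (\<Sum>w\<in>V. (if v = w then letter_sign b * H1_matrix V E \<Phi> t w else 0))
          + (\<Sum>w\<in>V. word_exp_sum xs w * H1_matrix V E \<Phi> t w)"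
      unfolding sum.distrib[symmetric] by (rule sum.cong) (auto simp: l distrib_right)
    then show ?thesis using assms(1) v by simp
  qed
  finally show ?case .
qed

lemma H1_matrix_iso_left_inverse:
  assumes "finite V" "\<Phi> \<in> iso (RAAG V E) (RAAG V E)" "v \<in> V"
  shows "(\<Sum>t\<in>V. H1_matrix V E (inv_into (carrier (RAAG V E)) \<Phi>) s t * H1_matrix V E \<Phi> t v)
    = (if v = s then 1 else 0)"
proof -
  let ?\<Psi> = "inv_into (carrier (RAAG V E)) \<Phi>"
  have \<Psi>: "?\<Psi> \<in> hom (RAAG V E) (RAAG V E)"
    using group.iso_set_sym[OF group_RAAG assms(2)] by (simp add: iso_def)
  have gen: "raag_gen V E v \<in> carrier (RAAG V E)"
    using assms(3) by (rule raag_gen_in_carrier)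
  then have image: "\<Phi> (raag_gen V E v) \<in> carrier (RAAG V E)"
    using assms(2) by (auto simp: iso_def intro: hom_in_carrier)
  have "?\<Psi> (\<Phi> (raag_gen V E v)) = raag_gen V E v"
    using assms(2) gen by (simp add: iso_def bij_betw_def)
  then have "(if v = s then 1 else 0) = exp_sum (?\<Psi> (raag_eq V E `` {rep (\<Phi> (raag_gen V E v))})) s"
    using image by (simp add: carrier_RAAG_rep exp_sum_raag_gen)
  also have "\<dots> = (\<Sum>t\<in>V. word_exp_sum (rep (\<Phi> (raag_gen V E v))) t * H1_matrix V E ?\<Psi> s t)"
    by (rule exp_sum_hom_class[OF assms(1) \<Psi> carrier_RAAG_rep(1)[OF image]])
  finally show ?thesis
    by (simp add: H1_matrix_def exp_sum_eq_word_exp_sum mult.commute)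
qed

lemma H1_matrix_minor_of_edge:
  assumes "\<Phi> \<in> hom (RAAG V E) (RAAG W D)" "u \<in> V" "a \<in> V" "E u a"
    and "s \<noteq> t" "\<not> D s t" "\<And>x y. D x y \<Longrightarrow> D y x"
  shows "H1_matrix V E \<Phi> s u * H1_matrix V E \<Phi> t a = H1_matrix V E \<Phi> s a * H1_matrix V E \<Phi> t u"
proof -
  have words: "[(u, True)] \<in> words V" "[(a, True)] \<in> words V"
    using assms(2,3) by (simp_all add: words_def)
  have "([] @ [(u, True), (a, True)] @ [], [] @ [(a, True), (u, True)] @ []) \<in> raag_step V E"
    using assms(2-4) by (intro raag_step.comm) (simp_all add: words_def)
  then have "([(u, True), (a, True)], [(a, True), (u, True)]) \<in> raag_eq V E"
    by (simp add: raag_eq_def r_into_rtrancl)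
  then have "raag_gen V E u \<otimes>\<^bsub>RAAG V E\<^esub> raag_gen V E a = raag_gen V E a \<otimes>\<^bsub>RAAG V E\<^esub> raag_gen V E u"
    by (simp add: raag_gen_def RAAG_mult_class words raag_eq_class_eq_iff)
  then have "\<Phi> (raag_gen V E u) \<otimes>\<^bsub>RAAG W D\<^esub> \<Phi> (raag_gen V E a)
      = \<Phi> (raag_gen V E a) \<otimes>\<^bsub>RAAG W D\<^esub> \<Phi> (raag_gen V E u)"
    using hom_mult[OF assms(1) raag_gen_in_carrier[OF assms(2)] raag_gen_in_carrier[OF assms(3)]]
      hom_mult[OF assms(1) raag_gen_in_carrier[OF assms(3)] raag_gen_in_carrier[OF assms(2)]] by simp
  from exp_sum_commuting_minor[OF this assms(5,6)] assms(7) show ?thesis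
    unfolding H1_matrix_def by blast
qed

section \<open>Columns of left-invertible matrices\<close>

lemma left_invertible_columns_not_proportional:
  fixes M N :: "'v \<Rightarrow> 'v \<Rightarrow> 'r::comm_ring_1"
  assumes left_inverse: "\<And>v s. v \<in> V \<Longrightarrow> (\<Sum>t\<in>V. N s t * M t v) = (if v = s then 1 else 0)"
    and "u \<in> V" "a \<in> V" "u \<noteq> a" "q \<noteq> 0"
    and proportional: "\<And>t. t \<in> V \<Longrightarrow> q * M t a = c * M t u"
  shows False
proof -
  have "q = q * (\<Sum>t\<in>V. N a t * M t a)" using left_inverse[OF assms(3)] by simp
  also have "\<dots> = (\<Sum>t\<in>V. N a t * (q * M t a))" by (simp add: sum_distrib_left ac_simps)
  also have "\<dots> = (\<Sum>t\<in>V. N a t * (c * M t u))" using proportional by simp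
  also have "\<dots> = c * (\<Sum>t\<in>V. N a t * M t u)" by (simp add: sum_distrib_left ac_simps)
  also have "\<dots> = 0" using left_inverse[OF assms(2)] assms(4) by simp
  finally show False using assms(5) by simp
qed

lemma left_invertible_column_nonzero_at_most_once:
  fixes M N :: "'v \<Rightarrow> 'v \<Rightarrow> 'r::idom"
  assumes left_inverse: "\<And>v s. v \<in> V \<Longrightarrow> (\<Sum>t\<in>V. N s t * M t v) = (if v = s then 1 else 0)"
    and minor: "\<And>s t. s \<noteq> t \<Longrightarrow> \<not> E s t \<Longrightarrow> M s u * M t a = M s a * M t u"
    and "u \<in> V" "a \<in> V" "u \<noteq> a"
    and "w \<noteq> w'" "\<not> E w w'" "\<And>t. E w t \<Longrightarrow> \<not> E w' t"
  shows "M w u = 0 \<or> M w' u = 0"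
proof (rule ccontr)
  assume "\<not> (M w u = 0 \<or> M w' u = 0)"
  then have nonzero: "M w u \<noteq> 0" "M w' u \<noteq> 0" by simp_all
  have "M w u * M t a = M w a * M t u" for t
  proof (cases "t = w \<or> \<not> E w t")
    case True
    then show ?thesis using minor[of w t] by (cases "t = w") simp_all
  next
    case False
    then have "w' \<noteq> t" "\<not> E w' t" using assms(7,8) by auto
    then have "M w' u * (M w u * M t a) = M w u * (M w' a * M t u)"
      using minor[of w' t] by (simp add: ac_simps)
    also have "\<dots> = M w' u * (M w a * M t u)"
      using minor[OF assms(6,7)] by (simp add: ac_simps)
    finally show ?thesis using nonzero(2) by simp
  qed
  then show False
    using left_invertible_columns_not_proportional[OF left_inverse assms(3-5) nonzero(1)] by blast
qed

section \<open>Lifts along coverings\<close>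

lemma covering_map_same_fiber:
  assumes "simple_graph VL EL" "simple_graph VG EG" "covering_map VL EL VG EG p"
    and "p w = p w'" "w \<noteq> w'"
  shows "\<not> EL w w'" and "EL w t \<Longrightarrow> \<not> EL w' t"
proof -
  show "\<not> EL w w'"
    using assms(2-4) by (metis covering_map_def simple_graph_def)
  assume "EL w t"
  show "\<not> EL w' t"
  proof
    assume "EL w' t"
    with \<open>EL w t\<close> assms(1) have "t \<in> VL" "EL t w" "EL t w'"
      by (auto simp: simple_graph_def)
    then have "inj_on p {y. EL t y}"
      using assms(3) by (auto simp: covering_map_def bij_betw_def)
    with \<open>EL t w\<close> \<open>EL t w'\<close> assms(4,5) show False
      by (auto dest: inj_onD)
  qed
qed

lemma H1_matrix_column_sparse_on_fibers:
  assumes "simple_graph VL EL" "simple_graph VG EG" "no_isolated VL EL"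
    and "covering_map VL EL VG EG p" "F \<in> iso (RAAG VL EL) (RAAG VL EL)"
    and "u \<in> VL" "p w = p w'" "w \<noteq> w'"
  shows "H1_matrix VL EL F w u = 0 \<or> H1_matrix VL EL F w' u = 0"
proof -
  obtain a where a: "EL u a" using assms(3,6) by (auto simp: no_isolated_def)
  with assms(1) have "a \<in> VL" "u \<noteq> a" "\<And>x y. EL x y \<Longrightarrow> EL y x"
    by (auto simp: simple_graph_def)
  have F: "F \<in> hom (RAAG VL EL) (RAAG VL EL)" using assms(5) by (simp add: iso_def)
  show ?thesis
  proof (rule left_invertible_column_nonzero_at_most_once[where E = EL and a = a])
    show "(\<Sum>t\<in>VL. H1_matrix VL EL (inv_into (carrier (RAAG VL EL)) F) s t * H1_matrix VL EL F t v)
        = (if v = s then 1 else 0)" if "v \<in> VL" for v s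
      using H1_matrix_iso_left_inverse[OF _ assms(5) that] assms(1) by (simp add: simple_graph_def)
    show "H1_matrix VL EL F s u * H1_matrix VL EL F t a = H1_matrix VL EL F s a * H1_matrix VL EL F t u"
      if "s \<noteq> t" "\<not> EL s t" for s t
      by (rule H1_matrix_minor_of_edge[OF F assms(6) \<open>a \<in> VL\<close> a that]) fact
    show "\<not> EL w w'" "\<And>t. EL w t \<Longrightarrow> \<not> EL w' t"
      using covering_map_same_fiber[OF assms(1,2,4,7,8)] by blast+
  qed (use assms(6) \<open>a \<in> VL\<close> \<open>u \<noteq> a\<close> assms(8) in auto)
qed

lemma raag_eq_relabel:
  assumes "(xs, ys) \<in> raag_eq VL EL" "p ` VL \<subseteq> VG" "\<And>u w. EL u w \<Longrightarrow> EG (p u) (p w)"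
  shows "(map (\<lambda>(a, s). (p a, s)) xs, map (\<lambda>(a, s). (p a, s)) ys) \<in> raag_eq VG EG"
proof -
  have words: "map (\<lambda>(a, s). (p a, s)) zs \<in> words VG" if "zs \<in> words VL" for zs
    using that assms(2) by (force simp: words_def)
  have relabel_step: "(map (\<lambda>(a, s). (p a, s)) xs, map (\<lambda>(a, s). (p a, s)) ys) \<in> raag_step VG EG"
    if "(xs, ys) \<in> raag_step VL EL" for xs ys
    using that
  proof (induction rule: raag_step.induct)
    case (cancel xs ys a b)
    then have "(map (\<lambda>(a, s). (p a, s)) xs @ [(p a, b), (p a, \<not> b)] @ map (\<lambda>(a, s). (p a, s)) ys,
        map (\<lambda>(a, s). (p a, s)) xs @ map (\<lambda>(a, s). (p a, s)) ys) \<in> raag_step VG EG"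
      using assms(2) by (intro raag_step.cancel words) auto
    then show ?case by simp
  next
    case (comm xs ys a c b d)
    then have "(map (\<lambda>(a, s). (p a, s)) xs @ [(p a, b), (p c, d)] @ map (\<lambda>(a, s). (p a, s)) ys,
        map (\<lambda>(a, s). (p a, s)) xs @ [(p c, d), (p a, b)] @ map (\<lambda>(a, s). (p a, s)) ys)
        \<in> raag_step VG EG"
      using assms(2,3) by (intro raag_step.comm words) auto
    then show ?case by simp
  qed
  from assms(1) show ?thesis
    unfolding raag_eq_def
  proof (induction rule: rtrancl_induct)
    case (step ys zs)
    then have "(map (\<lambda>(a, s). (p a, s)) ys, map (\<lambda>(a, s). (p a, s)) zs)
        \<in> raag_step VG EG \<union> (raag_step VG EG)\<inverse>"
      using relabel_step by blast
    with step show ?case by (meson rtrancl.rtrancl_into_rtrancl)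
  qed simp
qed

lemma word_exp_sum_relabel:
  assumes "finite VL" "xs \<in> words VL"
  shows "word_exp_sum (map (\<lambda>(a, s). (p a, s)) xs) x = (\<Sum>w\<in>fiber VL p x. word_exp_sum xs w)"
  using assms(2)
proof (induction xs)
  case (Cons l xs)
  obtain a b where l: "l = (a, b)" by fastforce
  with Cons.prems have "a \<in> VL" "xs \<in> words VL" by (simp_all add: words_def)
  have "(\<Sum>w\<in>fiber VL p x. word_exp_sum (l # xs) w)
      = (\<Sum>w\<in>fiber VL p x. if a = w then letter_sign b else 0) + (\<Sum>w\<in>fiber VL p x. word_exp_sum xs w)"
    unfolding sum.distrib[symmetric] by (rule sum.cong) (auto simp: l)
  also have "\<dots> = (if p a = x then letter_sign b else 0) + (\<Sum>w\<in>fiber VL p x. word_exp_sum xs w)"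
    using assms(1) \<open>a \<in> VL\<close> by (simp add: fiber_def)
  finally show ?case using Cons.IH \<open>xs \<in> words VL\<close> l by simp
qed simp

lemma induced_hom_raag_gen:
  assumes "u \<in> VL" "p ` VL \<subseteq> VG" "\<And>u w. EL u w \<Longrightarrow> EG (p u) (p w)"
  shows "induced_hom VG EG p (raag_gen VL EL u) = raag_gen VG EG (p u)"
  using raag_eq_relabel[where EG = EG, OF raag_eq_rep_class[of "[(u, True)]" VL EL] assms(2,3)]
  by (simp add: induced_hom_def raag_gen_def flip: raag_eq_class_eq_iff)

lemma H1_matrix_lift_fiber_sum:
  assumes "finite VL" "p ` VL \<subseteq> VG" "\<And>u w. EL u w \<Longrightarrow> EG (p u) (p w)"
    and "F \<in> hom (RAAG VL EL) (RAAG VL EL)"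
    and lift: "\<forall>X\<in>carrier (RAAG VL EL). f (induced_hom VG EG p X) = induced_hom VG EG p (F X)"
    and "u \<in> VL"
  shows "H1_matrix VG EG f x (p u) = (\<Sum>w\<in>fiber VL p x. H1_matrix VL EL F w u)"
proof -
  have gen: "raag_gen VL EL u \<in> carrier (RAAG VL EL)"
    using assms(6) by (rule raag_gen_in_carrier)
  then have words: "rep (F (raag_gen VL EL u)) \<in> words VL"
    by (rule carrier_RAAG_rep(1)[OF hom_in_carrier[OF assms(4)]])
  have "H1_matrix VG EG f x (p u) = exp_sum (f (induced_hom VG EG p (raag_gen VL EL u))) x"
    by (simp add: H1_matrix_def induced_hom_raag_gen[where EL = EL and EG = EG, OF assms(6,2,3)])
  also have "\<dots> = exp_sum (induced_hom VG EG p (F (raag_gen VL EL u))) x"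
    using lift gen by simp
  also have "\<dots> = word_exp_sum (map (\<lambda>(a, s). (p a, s)) (rep (F (raag_gen VL EL u)))) x"
    by (simp only: induced_hom_def exp_sum_class)
  also have "\<dots> = (\<Sum>w\<in>fiber VL p x. word_exp_sum (rep (F (raag_gen VL EL u))) w)"
    by (rule word_exp_sum_relabel[OF assms(1) words])
  finally show ?thesis
    by (simp add: H1_matrix_def exp_sum_eq_word_exp_sum)
qed

lemma blow_up_of_fiber_sums:
  assumes "finite VL" "p ` VL = VG"
    and fiber_sum: "\<And>x u. x \<in> VG \<Longrightarrow> u \<in> VL \<Longrightarrow> M x (p u) = (\<Sum>w\<in>fiber VL p x. Mt w u)"
    and sparse: "\<And>u w w'. u \<in> VL \<Longrightarrow> p w = p w' \<Longrightarrow> w \<noteq> w' \<Longrightarrow> Mt w u = 0 \<or> Mt w' u = 0"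
  shows "blow_up VL VG p Mt M"
  unfolding blow_up_def
proof (intro ballI)
  fix x y u
  assume "x \<in> VG" "y \<in> VG" "u \<in> fiber VL p y"
  then have u: "u \<in> VL" "p u = y" by (simp_all add: fiber_def)
  have others_vanish: "\<forall>w'\<in>fiber VL p x. w' \<noteq> w \<longrightarrow> Mt w' u = 0"
    if "w \<in> fiber VL p x" "Mt w u \<noteq> 0" for w
  proof (intro ballI impI)
    fix w'
    assume "w' \<in> fiber VL p x" "w' \<noteq> w"
    with that show "Mt w' u = 0" using sparse[OF u(1), of w w'] by (auto simp: fiber_def)
  qed
  show "\<exists>w\<in>fiber VL p x. Mt w u = M x y \<and> (\<forall>w'\<in>fiber VL p x. w' \<noteq> w \<longrightarrow> Mt w' u = 0)"
  proof (cases "\<exists>w\<in>fiber VL p x. Mt w u \<noteq> 0")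
    case True
    then obtain w where w: "w \<in> fiber VL p x" "Mt w u \<noteq> 0" by blast
    have "M x y = Mt w u + (\<Sum>w'\<in>fiber VL p x - {w}. Mt w' u)"
      using fiber_sum[OF \<open>x \<in> VG\<close> u(1)] u(2) sum.remove[OF _ w(1)] assms(1)
      by (simp add: fiber_def)
    also have "\<dots> = Mt w u" using others_vanish[OF w] by simp
    finally show ?thesis using w(1) others_vanish[OF w] by auto
  next
    case False
    then have "M x y = 0" using fiber_sum[OF \<open>x \<in> VG\<close> u(1)] u(2) by simp
    obtain w where "w \<in> fiber VL p x"
      using \<open>x \<in> VG\<close> assms(2) by (auto simp: fiber_def)
    with False \<open>M x y = 0\<close> show ?thesis by (intro bexI[of _ w]) auto
  qed
qed

theorem lemma8p3:
  fixes VL :: "'a set" and EL :: "'a \<Rightarrow> 'a \<Rightarrow> bool"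
    and VG :: "'b set" and EG :: "'b \<Rightarrow> 'b \<Rightarrow> bool"
    and p :: "'a \<Rightarrow> 'b" and n m :: nat
    and F :: "('a \<times> bool) list set \<Rightarrow> ('a \<times> bool) list set"
    and f :: "('b \<times> bool) list set \<Rightarrow> ('b \<times> bool) list set"
  assumes "simple_graph VL EL" and "simple_graph VG EG"
    and "no_isolated VL EL" and "no_isolated VG EG"
    and "regular_covering VL EL VG EG p"
    and "\<forall>x\<in>VG. card (fiber VL p x) = n"
    and "card VG = m"
    and "F \<in> iso (RAAG VL EL) (RAAG VL EL)"
    and "f \<in> iso (RAAG VG EG) (RAAG VG EG)"
    and "\<forall>X\<in>carrier (RAAG VL EL). f (induced_hom VG EG p X) = induced_hom VG EG p (F X)"
  shows "blow_up VL VG p (H1_matrix VL EL F) (H1_matrix VG EG f)"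
proof -
  have covering: "covering_map VL EL VG EG p"
    using assms(5) by (simp add: regular_covering_def)
  then have image: "p ` VL = VG" and edges: "\<And>u w. EL u w \<Longrightarrow> EG (p u) (p w)"
    by (simp_all add: covering_map_def)
  have finite: "finite VL" using assms(1) by (simp add: simple_graph_def)
  have F: "F \<in> hom (RAAG VL EL) (RAAG VL EL)" using assms(8) by (simp add: iso_def)
  show ?thesis
  proof (rule blow_up_of_fiber_sums[OF finite image])
    show "H1_matrix VG EG f x (p u) = (\<Sum>w\<in>fiber VL p x. H1_matrix VL EL F w u)" if "u \<in> VL" for x u
      by (rule H1_matrix_lift_fiber_sum[OF finite equalityD1[OF image] edges F assms(10) that])
    show "H1_matrix VL EL F w u = 0 \<or> H1_matrix VL EL F w' u = 0"
      if "u \<in> VL" "p w = p w'" "w \<noteq> w'" for u w w'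
      by (rule H1_matrix_column_sparse_on_fibers[OF assms(1-3) covering assms(8) that])
  qed
qed

end
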